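(* Let $G$ be a connected graph on $n$ vertices with distance squared matrix $\Delta$. Let $v$ be a vertex of degree $2$ whose removal disconnects $G$, and let $u,w$ be the two neighbors of $v$. Define $\mathbf x\in\mathbb R^n$ by $x_u=x_w=1$, $x_v=-2$, and $x_i=0$ for all other vertices $i$. Then $\Delta\mathbf x=2\cdot\mathbf 1$, where $\mathbf 1$ is the all-ones vector.
   Context: For a connected graph $G$ with vertices $1,\dots,n$, the distance squared matrix $\Delta$ is the $n\times n$ matrix with $(i,j)$ entry $d_{ij}^2$, where $d_{ij}$ is the graph distance between $i$ and $j$ (with $d_{ii}=0$). *)

theory Defs
  imports "HOL-Analysis.Analysis"
begin

text \<open>A finite simple graph on the vertex type 'n (vertices = UNIV),
given by an adjacency relation E.\<close>

definition simple_graph :: "('n \<Rightarrow> 'n \<Rightarrow> bool) \<Rightarrow> bool" where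
  "simple_graph E \<longleftrightarrow> (\<forall>a b. E a b \<longrightarrow> E b a) \<and> (\<forall>a. \<not> E a a)"

definition graph_connected :: "('n \<Rightarrow> 'n \<Rightarrow> bool) \<Rightarrow> bool" where
  "graph_connected E \<longleftrightarrow> (\<forall>a b. E\<^sup>*\<^sup>* a b)"

definition gdist :: "('n \<Rightarrow> 'n \<Rightarrow> bool) \<Rightarrow> 'n \<Rightarrow> 'n \<Rightarrow> nat" where
  "gdist E a b = (LEAST k. (E ^^ k) a b)"

definition degree :: "('n \<Rightarrow> 'n \<Rightarrow> bool) \<Rightarrow> 'n \<Rightarrow> nat" where
  "degree E v = card {u. E v u}"

definition is_cut_vertex :: "('n \<Rightarrow> 'n \<Rightarrow> bool) \<Rightarrow> 'n \<Rightarrow> bool" where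
  "is_cut_vertex E v \<longleftrightarrow>
     (\<exists>a b. a \<noteq> v \<and> b \<noteq> v \<and> \<not> (\<lambda>x y. E x y \<and> x \<noteq> v \<and> y \<noteq> v)\<^sup>*\<^sup>* a b)"

definition dist_sq_matrix :: "('n::finite \<Rightarrow> 'n \<Rightarrow> bool) \<Rightarrow> real ^ 'n ^ 'n" where
  "dist_sq_matrix E = (\<chi> i j. (real (gdist E i j))\<^sup>2)"

end

theory Submission
  imports Defs
begin

text \<open>Deleting the cut vertex v splits the remaining vertices into the component of u and
  that of w. A walk from a vertex i on the side of u to v or to w has to pass through u and then
  through v, so with a = d(i,u) we get d(i,v) = a + 1 and d(i,w) = a + 2, and the i-th entry
  of \<open>\<Delta>x\<close> is a^2 + (a + 2)^2 - 2(a + 1)^2 = 2. The side of w is symmetric, and the row of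
  v itself gives 1 + 1 - 0.\<close>

definition del_vertex :: "('n \<Rightarrow> 'n \<Rightarrow> bool) \<Rightarrow> 'n \<Rightarrow> 'n \<Rightarrow> 'n \<Rightarrow> bool" where
  "del_vertex E v x y \<longleftrightarrow> E x y \<and> x \<noteq> v \<and> y \<noteq> v"

lemma is_cut_vertex_del_vertex:
  "is_cut_vertex E v \<longleftrightarrow> (\<exists>a b. a \<noteq> v \<and> b \<noteq> v \<and> \<not> (del_vertex E v)\<^sup>*\<^sup>* a b)"
  unfolding is_cut_vertex_def del_vertex_def by simp

lemma del_vertex_rtranclp_avoids:
  assumes "(del_vertex E v)\<^sup>*\<^sup>* a b" "a \<noteq> v"
  shows "b \<noteq> v"
  using assms by (induction rule: rtranclp_induct) (auto simp: del_vertex_def)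

lemma del_vertex_rtranclp_sym:
  assumes "simple_graph E" "(del_vertex E v)\<^sup>*\<^sup>* a b"
  shows "(del_vertex E v)\<^sup>*\<^sup>* b a"
proof -
  have "symp (del_vertex E v)"
    using assms(1) by (auto simp: simple_graph_def del_vertex_def intro: sympI)
  then show ?thesis
    using assms(2) by (blast dest: sympD[OF symp_rtranclp])
qed

lemma walk_leaves_component:
  assumes "(E ^^ k) a b" "a \<noteq> v" "\<not> (del_vertex E v)\<^sup>*\<^sup>* a b"
  shows "\<exists>c m. m < k \<and> (del_vertex E v)\<^sup>*\<^sup>* a c \<and> E c v \<and> (E ^^ m) a c \<and> (E ^^ (k - Suc m)) v b"
  using assms
proof (induction k arbitrary: a)
  case 0
  then show ?case by simp
next
  case (Suc k)
  from \<open>(E ^^ Suc k) a b\<close> obtain y where "E a y" and y_b: "(E ^^ k) y b"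
    by (blast elim: relpowp_Suc_E2)
  show ?case
  proof (cases "y = v")
    case True
    then show ?thesis
      using \<open>E a y\<close> y_b by (intro exI[of _ a] exI[of _ 0]) auto
  next
    case False
    with \<open>E a y\<close> \<open>a \<noteq> v\<close> have "del_vertex E v a y"
      by (simp add: del_vertex_def)
    with Suc.prems(3) have "\<not> (del_vertex E v)\<^sup>*\<^sup>* y b"
      by (meson converse_rtranclp_into_rtranclp)
    from Suc.IH[OF y_b False this] obtain c m where
      "m < k" "(del_vertex E v)\<^sup>*\<^sup>* y c" "E c v" "(E ^^ m) y c" "(E ^^ (k - Suc m)) v b"
      by blast
    moreover have "(E ^^ Suc m) a c"
      using \<open>E a y\<close> \<open>(E ^^ m) y c\<close> by (rule relpowp_Suc_I2)
    ultimately show ?thesis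
      using \<open>del_vertex E v a y\<close>
      by (intro exI[of _ c] exI[of _ "Suc m"]) (auto intro: converse_rtranclp_into_rtranclp)
  qed
qed

lemma gdist_le: "(E ^^ k) a b \<Longrightarrow> gdist E a b \<le> k"
  unfolding gdist_def by (rule Least_le)

lemma relpowp_gdist: "E\<^sup>*\<^sup>* a b \<Longrightarrow> (E ^^ gdist E a b) a b"
  unfolding gdist_def by (metis rtranclp_imp_relpowp LeastI)

lemma gdist_self: "gdist E a a = 0"
  using gdist_le[of 0 E a a] by simp

lemma gdist_edge:
  assumes "simple_graph E" "E a b"
  shows "gdist E a b = 1"
proof -
  have "(E ^^ 1) a b"
    using assms(2) by (simp only: relpowp_1)
  then have "gdist E a b \<le> 1"
    by (rule gdist_le)
  moreover have "gdist E a b \<noteq> 0"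
    using relpowp_gdist[OF r_into_rtranclp[of E, OF assms(2)]] assms
    unfolding simple_graph_def by (cases "gdist E a b") auto
  ultimately show ?thesis by linarith
qed

lemma gdist_triangle:
  assumes "E\<^sup>*\<^sup>* a c" "E\<^sup>*\<^sup>* c b"
  shows "gdist E a b \<le> gdist E a c + gdist E c b"
proof -
  have "(E ^^ (gdist E a c + gdist E c b)) a b"
    using relpowp_gdist[OF assms(1)] relpowp_gdist[OF assms(2)] by (auto simp: relpowp_add)
  then show ?thesis by (rule gdist_le)
qed

lemma gdist_through:
  assumes "E\<^sup>*\<^sup>* a b"
    and through: "\<And>k. (E ^^ k) a b \<Longrightarrow> \<exists>m\<le>k. (E ^^ m) a c \<and> (E ^^ (k - m)) c b"
  shows "gdist E a b = gdist E a c + gdist E c b"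
proof -
  obtain m where "m \<le> gdist E a b" "(E ^^ m) a c" "(E ^^ (gdist E a b - m)) c b"
    using through[OF relpowp_gdist[OF assms(1)]] by blast
  then have "gdist E a c + gdist E c b \<le> gdist E a b"
    using gdist_le[of m E a c] gdist_le[of "gdist E a b - m" E c b] by linarith
  moreover have "gdist E a b \<le> gdist E a c + gdist E c b"
    using \<open>(E ^^ m) a c\<close> \<open>(E ^^ (gdist E a b - m)) c b\<close>
    by (blast intro: gdist_triangle relpowp_imp_rtranclp)
  ultimately show ?thesis by linarith
qed

lemma neighbours_of_degree_2:
  fixes E :: "'n::finite \<Rightarrow> 'n \<Rightarrow> bool"
  assumes "degree E v = 2" "u \<noteq> w" "E v u" "E v w"
  shows "{c. E v c} = {u, w}"
proof -
  have "card {u, w} = card {c. E v c}"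
    using assms(1,2) unfolding degree_def by simp
  with assms(3,4) show ?thesis
    by (intro card_subset_eq[symmetric]) auto
qed

context
  fixes E :: "'n \<Rightarrow> 'n \<Rightarrow> bool" and u v w :: 'n
  assumes simple: "simple_graph E"
    and connected: "graph_connected E"
    and neighbours: "{c. E v c} = {u, w}"
begin

lemma connected_rtranclp: "E\<^sup>*\<^sup>* a b"
  using connected unfolding graph_connected_def by blast

lemma neighbour_of_cut: "E c v \<Longrightarrow> c = u \<or> c = w"
  using simple neighbours unfolding simple_graph_def by blast

lemma in_component_of_neighbour:
  assumes "i \<noteq> v"
  shows "(del_vertex E v)\<^sup>*\<^sup>* u i \<or> (del_vertex E v)\<^sup>*\<^sup>* w i"
proof -
  obtain k where "(E ^^ k) i v"
    using rtranclp_imp_relpowp[OF connected_rtranclp] by blast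
  moreover have "\<not> (del_vertex E v)\<^sup>*\<^sup>* i v"
    using del_vertex_rtranclp_avoids[OF _ assms] by blast
  ultimately obtain c where "(del_vertex E v)\<^sup>*\<^sup>* i c" "E c v"
    using walk_leaves_component[OF _ assms] by meson
  then have "(del_vertex E v)\<^sup>*\<^sup>* c i" "c = u \<or> c = w"
    using del_vertex_rtranclp_sym[OF simple] neighbour_of_cut by auto
  then show ?thesis by auto
qed

lemma neighbours_disconnected:
  assumes "is_cut_vertex E v"
  shows "\<not> (del_vertex E v)\<^sup>*\<^sup>* u w"
proof
  assume "(del_vertex E v)\<^sup>*\<^sup>* u w"
  then have "(del_vertex E v)\<^sup>*\<^sup>* u i" if "i \<noteq> v" for i
    using in_component_of_neighbour[OF that] by (blast intro: rtranclp_trans)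
  moreover obtain a b where "a \<noteq> v" "b \<noteq> v" "\<not> (del_vertex E v)\<^sup>*\<^sup>* a b"
    using assms unfolding is_cut_vertex_del_vertex by blast
  ultimately show False
    using del_vertex_rtranclp_sym[OF simple] by (blast intro: rtranclp_trans)
qed

lemma not_connected_to_both_neighbours:
  assumes "is_cut_vertex E v"
  shows "\<not> (del_vertex E v)\<^sup>*\<^sup>* i u \<or> \<not> (del_vertex E v)\<^sup>*\<^sup>* i w"
proof (rule ccontr)
  assume "\<not> ?thesis"
  then have "(del_vertex E v)\<^sup>*\<^sup>* u i" "(del_vertex E v)\<^sup>*\<^sup>* i w"
    using del_vertex_rtranclp_sym[OF simple] by auto
  then have "(del_vertex E v)\<^sup>*\<^sup>* u w"
    by (rule rtranclp_trans)
  with neighbours_disconnected[OF assms] show False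
    by contradiction
qed

lemma gdist_on_side_of_u:
  assumes "i \<noteq> v" "\<not> (del_vertex E v)\<^sup>*\<^sup>* i w"
  shows "gdist E i v = gdist E i u + 1" "gdist E i w = gdist E i u + 2"
proof -
  have "E v u" "E v w"
    using neighbours by auto
  then have "E u v"
    using simple unfolding simple_graph_def by blast
  have "gdist E i v = gdist E i u + gdist E u v"
  proof (rule gdist_through[OF connected_rtranclp])
    fix k assume "(E ^^ k) i v"
    moreover have "\<not> (del_vertex E v)\<^sup>*\<^sup>* i v"
      using del_vertex_rtranclp_avoids[OF _ assms(1)] by blast
    ultimately obtain c m where "m < k" "(del_vertex E v)\<^sup>*\<^sup>* i c" "E c v"
      "(E ^^ m) i c" "(E ^^ (k - Suc m)) v v"
      using walk_leaves_component[OF _ assms(1)] by meson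
    moreover from this have "c = u"
      using neighbour_of_cut assms(2) by blast
    moreover have "(E ^^ (k - m)) u v"
      using relpowp_Suc_I2[OF \<open>E u v\<close> \<open>(E ^^ (k - Suc m)) v v\<close>]
      by (simp only: Suc_diff_Suc[OF \<open>m < k\<close>])
    ultimately show "\<exists>m\<le>k. (E ^^ m) i u \<and> (E ^^ (k - m)) u v"
      by (intro exI[of _ m]) simp
  qed
  then show i_v: "gdist E i v = gdist E i u + 1"
    using gdist_edge[OF simple \<open>E u v\<close>] by simp
  have "gdist E i w = gdist E i v + gdist E v w"
  proof (rule gdist_through[OF connected_rtranclp])
    fix k assume "(E ^^ k) i w"
    then obtain c m where "m < k" "E c v" "(E ^^ m) i c" "(E ^^ (k - Suc m)) v w"
      using walk_leaves_component[OF _ assms] by meson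
    moreover have "(E ^^ Suc m) i v"
      using \<open>(E ^^ m) i c\<close> \<open>E c v\<close> by (rule relpowp_Suc_I)
    ultimately show "\<exists>m\<le>k. (E ^^ m) i v \<and> (E ^^ (k - m)) v w"
      by (blast intro: Suc_leI)
  qed
  then show "gdist E i w = gdist E i u + 2"
    using i_v gdist_edge[OF simple \<open>E v w\<close>] by simp
qed

end

lemma dist_sq_second_difference:
  assumes "simple_graph E" "graph_connected E" "{c. E v c} = {u, w}" "is_cut_vertex E v"
  shows "(real (gdist E i u))\<^sup>2 + (real (gdist E i w))\<^sup>2 - 2 * (real (gdist E i v))\<^sup>2 = 2"
proof (cases "i = v")
  case True
  have "E v u" "E v w"
    using assms(3) by auto
  with True show ?thesis
    using gdist_self gdist_edge[OF assms(1)] by simp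
next
  case False
  have neighbours': "{c. E v c} = {w, u}"
    using assms(3) by auto
  from not_connected_to_both_neighbours[OF assms] show ?thesis
  proof
    assume "\<not> (del_vertex E v)\<^sup>*\<^sup>* i u"
    from gdist_on_side_of_u[OF assms(1,2) neighbours' False this] show ?thesis
      by (simp add: power2_eq_square algebra_simps)
  next
    assume "\<not> (del_vertex E v)\<^sup>*\<^sup>* i w"
    from gdist_on_side_of_u[OF assms(1-3) False this] show ?thesis
      by (simp add: power2_eq_square algebra_simps)
  qed
qed

lemma matrix_vector_mult_second_difference:
  fixes A :: "'a::comm_ring_1 ^ 'n ^ 'm"
  assumes "u \<noteq> w" "u \<noteq> v" "w \<noteq> v"
  shows "(A *v (\<chi> j. if j = u \<or> j = w then 1 else if j = v then -2 else 0)) $ i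
           = A $ i $ u + A $ i $ w - 2 * A $ i $ v"
proof -
  have "(A *v (\<chi> j. if j = u \<or> j = w then 1 else if j = v then -2 else 0)) $ i
        = (\<Sum>j\<in>UNIV. A $ i $ j * (if j = u \<or> j = w then 1 else if j = v then -2 else 0))"
    by (simp add: matrix_vector_mult_def)
  also have "\<dots> = (\<Sum>j\<in>UNIV. (if j = u then A $ i $ u else 0) + (if j = w then A $ i $ w else 0)
                      - (if j = v then 2 * A $ i $ v else 0))"
    using assms by (intro sum.cong) auto
  also have "\<dots> = A $ i $ u + A $ i $ w - 2 * A $ i $ v"
    by (simp add: sum.distrib sum_subtractf)
  finally show ?thesis .
qed

theorem lemma3p3:
  fixes E :: "'n::finite \<Rightarrow> 'n \<Rightarrow> bool" and u v w :: 'n and x :: "real ^ 'n"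
  assumes "simple_graph E"
    and "graph_connected E"
    and "degree E v = 2"
    and "is_cut_vertex E v"
    and "u \<noteq> w" and "E v u" and "E v w"
    and "x = (\<chi> i. if i = u \<or> i = w then 1 else if i = v then -2 else 0)"
  shows "dist_sq_matrix E *v x = (\<chi> i. 2)"
proof -
  have neighbours: "{c. E v c} = {u, w}"
    using neighbours_of_degree_2 assms(3,5-7) .
  have "u \<noteq> v" "w \<noteq> v"
    using assms(1,6,7) unfolding simple_graph_def by auto
  then show ?thesis
    unfolding assms(8) vec_eq_iff
    using matrix_vector_mult_second_difference[OF assms(5), where A = "dist_sq_matrix E"]
      dist_sq_second_difference[OF assms(1,2) neighbours assms(4)]
    by (simp add: dist_sq_matrix_def)
qed

end
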